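(* Let $0<\sigma<2$ and let $p(\zeta)=(|\zeta|^2+|\zeta|^{2-\sigma})^{1/2}$ for $\zeta\in\mathbb{R}^3$. Let $a,b,c\in\mathbb{R}^3$ with $a=b+c$ and $|c|\le\min\{|a|,|b|\}$. If $|b|\ge1$, then \[ |p(a)-p(b)-p(c)|\gtrsim \frac{|c|}{1+(|a||c|)^\sigma}+|c|\big(1-\cos[a,c]+1-\cos[a,b]\big). \] Moreover, if $|c|<1$, then \[ |p(a)-p(b)-p(c)|\gtrsim\frac{|c|^{(2-\sigma)/2}}{(1+|b|^\sigma)^{1/2}} . \]
   Context: $[x,y]$ denotes the angle between vectors $x,y\in\mathbb{R}^3$. Implicit constants depend only on $\sigma$. *)

theory Defs
  imports "HOL-Analysis.Analysis"
begin

text \<open>Angle between two vectors (convention: arccos of the normalized inner product;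
  for a zero vector the quotient is 0 in Isabelle, giving angle pi/2).\<close>
definition vangle :: "real^3 \<Rightarrow> real^3 \<Rightarrow> real" where
  "vangle x y = arccos (inner x y / (norm x * norm y))"

definition psym :: "real \<Rightarrow> real^3 \<Rightarrow> real" where
  "psym \<sigma> \<zeta> = sqrt ((norm \<zeta>)\<^sup>2 + norm \<zeta> powr (2 - \<sigma>))"

end

theory Submission
  imports Defs
begin

text \<open>Since p is radial, p(z) = F(|z|) with F(r) = r G(r), where G(r) = (1 + r^(-\<sigma>))^(1/2)
  is decreasing. With x = |b|, y = |c|, s = |a| one has y \<le> x and s \<le> x + y, and
  F(x) + F(y) - F(s) = [F(x) + F(y) - F(x + y)] + [F(x + y) - F(s)].
  The first bracket measures the strict subadditivity of F: it is at least y (G(y) - G(2y)),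
  which is comparable to y^(1 - \<sigma>) / G(y) and dominates both |c| / (1 + (|a||c|)^\<sigma>) and,
  for |c| < 1, |c|^((2 - \<sigma>)/2). The second bracket is at least (x + y - s)/4, and this
  triangle defect controls both angle terms through the identity
  |u||v| - u\<cdot>v = (|u - v|^2 - (|u| - |v|)^2)/2.\<close>

definition radial :: "real \<Rightarrow> real \<Rightarrow> real" where
  "radial \<sigma> r = sqrt (r\<^sup>2 + r powr (2 - \<sigma>))"

lemma psym_eq_radial: "psym \<sigma> \<zeta> = radial \<sigma> (norm \<zeta>)"
  by (simp add: psym_def radial_def)

lemma radial_mono:
  assumes "\<sigma> \<le> 2" "0 \<le> s" "s \<le> t"
  shows "radial \<sigma> s \<le> radial \<sigma> t"
proof -
  have "s powr (2 - \<sigma>) \<le> t powr (2 - \<sigma>)" using assms by (intro powr_mono2) auto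
  moreover have "s\<^sup>2 \<le> t\<^sup>2" using assms by (intro power_mono) auto
  ultimately show ?thesis unfolding radial_def by (intro real_sqrt_le_mono) linarith
qed

lemma radial_diff_ge:
  assumes "0 \<le> \<sigma>" "\<sigma> \<le> 2" "0 \<le> s" "s \<le> t" "1 \<le> t"
  shows "(t - s) / 4 \<le> radial \<sigma> t - radial \<sigma> s"
proof -
  define A B where "A = radial \<sigma> t" and "B = radial \<sigma> s"
  have "B \<le> A" "0 \<le> B" using radial_mono assms by (auto simp: A_def B_def radial_def)
  have "t powr (2 - \<sigma>) \<le> t powr 2" using assms by (intro powr_mono) auto
  also have "\<dots> = t\<^sup>2" using assms by (simp add: powr_numeral)
  moreover have "(2 * t)\<^sup>2 = 4 * t\<^sup>2" by (simp add: power_mult_distrib)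
  ultimately have "t\<^sup>2 + t powr (2 - \<sigma>) \<le> (2 * t)\<^sup>2" using zero_le_power2[of t] by linarith
  hence "A \<le> 2 * t" unfolding A_def radial_def using assms by (intro real_le_lsqrt) auto
  have "s powr (2 - \<sigma>) \<le> t powr (2 - \<sigma>)" using assms by (intro powr_mono2) auto
  hence "A\<^sup>2 - B\<^sup>2 \<ge> t\<^sup>2 - s\<^sup>2" using assms by (simp add: A_def B_def radial_def)
  moreover have "t\<^sup>2 - s\<^sup>2 \<ge> (t - s) * t"
    using assms by (simp add: power2_eq_square algebra_simps mult_left_mono)
  moreover have "A\<^sup>2 - B\<^sup>2 \<le> (A - B) * (4 * t)"
  proof -
    have "A\<^sup>2 - B\<^sup>2 = (A - B) * (A + B)" by (simp add: power2_eq_square algebra_simps)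
    also have "\<dots> \<le> (A - B) * (4 * t)"
      using \<open>B \<le> A\<close> \<open>0 \<le> B\<close> \<open>A \<le> 2 * t\<close> by (intro mult_left_mono) auto
    finally show ?thesis .
  qed
  ultimately have "(t - s) * t \<le> (4 * (A - B)) * t" by (simp add: algebra_simps)
  hence "t - s \<le> 4 * (A - B)" using assms by (simp add: mult_le_cancel_right)
  thus ?thesis unfolding A_def B_def by simp
qed

definition radial_ratio :: "real \<Rightarrow> real \<Rightarrow> real" where
  "radial_ratio \<sigma> r = sqrt (1 + r powr (-\<sigma>))"

lemma radial_ratio_ge_1: "1 \<le> radial_ratio \<sigma> r"
  by (simp add: radial_ratio_def)

lemma radial_eq_mult_ratio:
  assumes "0 < r"
  shows "radial \<sigma> r = r * radial_ratio \<sigma> r"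
proof -
  have "r powr (2 - \<sigma>) = r\<^sup>2 * r powr (-\<sigma>)"
    using assms powr_add[of r 2 "-\<sigma>"] by (simp add: powr_numeral)
  hence "r\<^sup>2 + r powr (2 - \<sigma>) = r\<^sup>2 * (1 + r powr (-\<sigma>))" by (simp add: algebra_simps)
  thus ?thesis using assms by (simp add: radial_def radial_ratio_def real_sqrt_mult)
qed

lemma radial_ratio_antimono:
  assumes "0 \<le> \<sigma>" "0 < u" "u \<le> v"
  shows "radial_ratio \<sigma> v \<le> radial_ratio \<sigma> u"
proof -
  have "v powr (-\<sigma>) \<le> u powr (-\<sigma>)" using assms by (intro powr_mono2') auto
  thus ?thesis unfolding radial_ratio_def by (intro real_sqrt_le_mono) linarith
qed

lemma radial_subadditivity_gap:
  assumes "0 \<le> \<sigma>" "0 < y" "y \<le> x"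
  shows "(1 - 2 powr (-\<sigma>)) * y powr (1 - \<sigma>) / (2 * radial_ratio \<sigma> y)
           \<le> radial \<sigma> x + radial \<sigma> y - radial \<sigma> (x + y)"
proof -
  define P Q where "P = radial_ratio \<sigma> y" and "Q = radial_ratio \<sigma> (2 * y)"
  have "radial \<sigma> x + radial \<sigma> y - radial \<sigma> (x + y)
          = x * (radial_ratio \<sigma> x - radial_ratio \<sigma> (x + y)) + y * (P - radial_ratio \<sigma> (x + y))"
    using assms by (simp add: radial_eq_mult_ratio P_def algebra_simps)
  also have "\<dots> \<ge> y * (P - Q)"
  proof -
    have "radial_ratio \<sigma> (x + y) \<le> radial_ratio \<sigma> x" "radial_ratio \<sigma> (x + y) \<le> Q"
      using radial_ratio_antimono assms by (auto simp: Q_def)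
    hence "0 \<le> x * (radial_ratio \<sigma> x - radial_ratio \<sigma> (x + y))"
      and "y * (P - Q) \<le> y * (P - radial_ratio \<sigma> (x + y))"
      using assms by (auto intro: mult_left_mono)
    thus ?thesis by linarith
  qed
  finally have gap: "y * (P - Q) \<le> radial \<sigma> x + radial \<sigma> y - radial \<sigma> (x + y)" .
  have "Q \<le> P" "1 \<le> P" "0 \<le> Q"
    using radial_ratio_antimono radial_ratio_ge_1 assms by (auto simp: P_def Q_def radial_ratio_def)
  have "(1 - 2 powr (-\<sigma>)) * y powr (-\<sigma>) = P\<^sup>2 - Q\<^sup>2"
    using assms by (simp add: P_def Q_def radial_ratio_def powr_mult algebra_simps)
  also have "\<dots> = (P - Q) * (P + Q)" by (simp add: power2_eq_square algebra_simps)
  also have "\<dots> \<le> (P - Q) * (2 * P)" using \<open>Q \<le> P\<close> by (intro mult_left_mono) auto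
  finally have "(1 - 2 powr (-\<sigma>)) * y powr (-\<sigma>) \<le> (P - Q) * (2 * P)" .
  hence "(1 - 2 powr (-\<sigma>)) * y powr (-\<sigma>) / (2 * P) \<le> P - Q"
    using \<open>1 \<le> P\<close> by (simp add: divide_le_eq mult.commute)
  hence "y * ((1 - 2 powr (-\<sigma>)) * y powr (-\<sigma>) / (2 * P)) \<le> y * (P - Q)"
    using assms by (intro mult_left_mono) auto
  moreover have "y powr (1 - \<sigma>) = y * y powr (-\<sigma>)"
    using assms powr_add[of y 1 "-\<sigma>"] by simp
  ultimately show ?thesis using gap by (simp add: P_def algebra_simps)
qed

lemma radial_subadditivity_gap_dominates:
  assumes "0 \<le> \<sigma>" "0 < y" "y \<le> x"
    and "T * radial_ratio \<sigma> y \<le> 2 * y powr (1 - \<sigma>)"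
  shows "(1 - 2 powr (-\<sigma>)) * T / 4 \<le> radial \<sigma> x + radial \<sigma> y - radial \<sigma> (x + y)"
proof -
  have "T / 2 \<le> y powr (1 - \<sigma>) / radial_ratio \<sigma> y"
    using assms(4) radial_ratio_ge_1[of \<sigma> y] by (simp add: le_divide_eq)
  moreover have "0 \<le> 1 - 2 powr (-\<sigma>)" using assms(1) powr_mono[of "-\<sigma>" 0 2] by simp
  ultimately have "(1 - 2 powr (-\<sigma>)) * (T / 2) \<le> (1 - 2 powr (-\<sigma>)) * (y powr (1 - \<sigma>) / radial_ratio \<sigma> y)"
    by (rule mult_left_mono)
  thus ?thesis
    using radial_subadditivity_gap[OF assms(1-3)] radial_ratio_ge_1[of \<sigma> y] by argo
qed

lemma radial_ratio_le_small:
  assumes "0 \<le> \<sigma>" "0 < y" "y \<le> 1"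
  shows "radial_ratio \<sigma> y \<le> 2 * y powr (-\<sigma> / 2)"
proof -
  have "1 \<le> y powr (-\<sigma>)" using assms powr_mono'[of "-\<sigma>" 0 y] by simp
  moreover have "(y powr (-\<sigma> / 2))\<^sup>2 = y powr (-\<sigma>)" using assms by (simp add: powr_power)
  ultimately have "1 + y powr (-\<sigma>) \<le> (2 * y powr (-\<sigma> / 2))\<^sup>2" by (simp add: power_mult_distrib)
  thus ?thesis unfolding radial_ratio_def by (intro real_le_lsqrt) auto
qed

lemma radial_ratio_le_large:
  assumes "0 \<le> \<sigma>" "1 \<le> y"
  shows "radial_ratio \<sigma> y \<le> 2"
proof -
  have "y powr (-\<sigma>) \<le> 1" using assms powr_mono[of "-\<sigma>" 0 y] by simp
  thus ?thesis unfolding radial_ratio_def by (intro real_le_lsqrt) auto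
qed

lemma small_scale_weight_le:
  assumes "0 \<le> \<sigma>" "0 < y" "y \<le> 1"
  shows "y powr ((2 - \<sigma>) / 2) * radial_ratio \<sigma> y \<le> 2 * y powr (1 - \<sigma>)"
proof -
  have "y powr ((2 - \<sigma>) / 2) * radial_ratio \<sigma> y \<le> y powr ((2 - \<sigma>) / 2) * (2 * y powr (-\<sigma> / 2))"
    using radial_ratio_le_small[OF assms] by (intro mult_left_mono) auto
  also have "\<dots> = 2 * y powr ((2 - \<sigma>) / 2 + (-\<sigma> / 2))" by (simp only: powr_add)
  also have "(2 - \<sigma>) / 2 + (-\<sigma> / 2) = 1 - \<sigma>" by (simp add: field_simps)
  finally show ?thesis .
qed

lemma interaction_weight_le:
  assumes "0 \<le> \<sigma>" "0 < y" "y \<le> s"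
  shows "y / (1 + (s * y) powr \<sigma>) * radial_ratio \<sigma> y \<le> 2 * y powr (1 - \<sigma>)"
proof (cases "y \<le> 1")
  case True
  have "0 < 1 + (s * y) powr \<sigma>" by (simp add: add_pos_nonneg)
  hence "y / (1 + (s * y) powr \<sigma>) \<le> y" using assms by (simp add: pos_divide_le_eq)
  also have "\<dots> = y powr 1" using assms by simp
  also have "\<dots> \<le> y powr ((2 - \<sigma>) / 2)" using assms True by (intro powr_mono') auto
  finally have "y / (1 + (s * y) powr \<sigma>) * radial_ratio \<sigma> y
                 \<le> y powr ((2 - \<sigma>) / 2) * radial_ratio \<sigma> y"
    by (rule mult_right_mono) (use radial_ratio_ge_1[of \<sigma> y] in simp)
  also have "\<dots> \<le> 2 * y powr (1 - \<sigma>)" using small_scale_weight_le[OF assms(1,2) True] .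
  finally show ?thesis .
next
  case False
  have "y powr \<sigma> \<le> (s * y) powr \<sigma>"
    using assms False by (intro powr_mono2) (auto intro: order_trans[of y "1 * y"] mult_right_mono)
  hence "y / (1 + (s * y) powr \<sigma>) \<le> y / y powr \<sigma>"
    using assms by (intro divide_left_mono) (auto intro!: mult_pos_pos add_pos_nonneg)
  also have "\<dots> = y powr (1 - \<sigma>)" using assms by (simp add: powr_diff)
  finally have "y / (1 + (s * y) powr \<sigma>) * radial_ratio \<sigma> y \<le> y powr (1 - \<sigma>) * 2"
    using radial_ratio_le_large[OF assms(1)] radial_ratio_ge_1[of \<sigma> y] False
    by (intro mult_mono) auto
  thus ?thesis by simp
qed

lemma radial_defect_ge:
  assumes "0 \<le> \<sigma>" "\<sigma> \<le> 2" "0 < y" "y \<le> x" "1 \<le> x" "0 \<le> s" "s \<le> x + y"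
    and "T * radial_ratio \<sigma> y \<le> 2 * y powr (1 - \<sigma>)"
  shows "(1 - 2 powr (-\<sigma>)) * T / 4 + (x + y - s) / 4 \<le> radial \<sigma> x + radial \<sigma> y - radial \<sigma> s"
  using radial_subadditivity_gap_dominates[OF assms(1,3,4,8)] radial_diff_ge[OF assms(1,2,6,7)] assms(3,5)
  by linarith

lemma norm_mult_minus_inner:
  fixes u v :: "'a::real_inner"
  shows "norm u * norm v - inner u v
           = (norm (u - v) + norm u - norm v) * (norm (u - v) - norm u + norm v) / 2"
proof -
  have "(norm (u - v))\<^sup>2 = (norm u)\<^sup>2 - 2 * inner u v + (norm v)\<^sup>2"
    by (simp add: power2_norm_eq_inner inner_diff inner_commute)
  thus ?thesis by (simp add: power2_eq_square algebra_simps)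
qed

lemma one_minus_cos_vangle:
  fixes x y :: "real^3"
  assumes "x \<noteq> 0" "y \<noteq> 0"
  shows "1 - cos (vangle x y) = (norm x * norm y - inner x y) / (norm x * norm y)"
proof -
  have "\<bar>inner x y\<bar> \<le> norm x * norm y" by (rule Cauchy_Schwarz_ineq2)
  hence "-1 \<le> inner x y / (norm x * norm y)" "inner x y / (norm x * norm y) \<le> 1"
    using assms by (auto simp: abs_le_iff divide_le_eq_1 le_divide_eq)
  hence "cos (vangle x y) = inner x y / (norm x * norm y)" unfolding vangle_def by (rule cos_arccos)
  thus ?thesis using assms by (simp add: diff_divide_distrib)
qed

lemma summand_vangle_defect_le_triangle_defect:
  fixes a b c :: "real^3"
  assumes "a = b + c" "a \<noteq> 0" "c \<noteq> 0"
  shows "norm c * (1 - cos (vangle a c)) \<le> norm b + norm c - norm a"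
proof -
  have "a - c = b" using assms(1) by simp
  have "norm c * (1 - cos (vangle a c)) = (norm a * norm c - inner a c) / norm a"
    using assms by (simp add: one_minus_cos_vangle)
  also have "\<dots> = (norm b + norm a - norm c) * (norm b + norm c - norm a) / (2 * norm a)"
    unfolding norm_mult_minus_inner[of a c] \<open>a - c = b\<close> by (simp add: algebra_simps)
  also have "\<dots> \<le> (2 * norm a) * (norm b + norm c - norm a) / (2 * norm a)"
    using norm_triangle_ineq[of b c] norm_triangle_ineq4[of a c] assms
    by (intro divide_right_mono mult_right_mono) auto
  also have "\<dots> = norm b + norm c - norm a" using assms by simp
  finally show ?thesis .
qed

lemma small_summand_vangle_defect_le_triangle_defect:
  fixes a b c :: "real^3"
  assumes "a = b + c" "c \<noteq> 0" "norm c \<le> norm a" "norm c \<le> norm b"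
  shows "norm c * (1 - cos (vangle a b)) \<le> norm b + norm c - norm a"
proof -
  define D where "D = norm b + norm c - norm a"
  have "0 \<le> D" using norm_triangle_ineq[of b c] assms(1) by (simp add: D_def)
  have "a - b = c" using assms(1) by simp
  have "0 < norm a" "0 < norm b" using assms by auto
  hence "norm c * (1 - cos (vangle a b)) = norm c * (norm a * norm b - inner a b) / (norm a * norm b)"
    by (simp add: one_minus_cos_vangle)
  also have "\<dots> = norm c * ((norm c + norm a - norm b) * D) / (2 * norm a * norm b)"
    unfolding norm_mult_minus_inner[of a b] \<open>a - b = c\<close> by (simp add: D_def algebra_simps)
  also have "\<dots> \<le> norm c * (2 * norm c * D) / (2 * norm a * norm b)"
    using norm_triangle_ineq[of b c] assms(1) \<open>0 \<le> D\<close>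
    by (intro divide_right_mono mult_left_mono mult_right_mono) auto
  also have "\<dots> = (norm c * norm c) * D / (norm a * norm b)" by simp
  also have "\<dots> \<le> (norm a * norm b) * D / (norm a * norm b)"
    using assms \<open>0 \<le> D\<close> by (intro divide_right_mono mult_right_mono mult_mono) auto
  also have "\<dots> = D" using \<open>0 < norm a\<close> \<open>0 < norm b\<close> by simp
  finally show ?thesis by (simp add: D_def)
qed

lemma norm_mult_vangle_defects_nonneg:
  "0 \<le> norm c * ((1 - cos (vangle a c)) + (1 - cos (vangle a b)))"
  by (intro mult_nonneg_nonneg add_nonneg_nonneg) (simp_all add: cos_le_one)

lemma psym_defect_ge:
  fixes a b c :: "real^3"
  assumes "0 \<le> \<sigma>" "\<sigma> \<le> 2" "a = b + c" "c \<noteq> 0" "norm c \<le> norm a" "norm c \<le> norm b" "1 \<le> norm b"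
    and "0 \<le> T" "T * radial_ratio \<sigma> (norm c) \<le> 2 * norm c powr (1 - \<sigma>)"
  shows "(1 - 2 powr (-\<sigma>)) / 8 * (T + norm c * ((1 - cos (vangle a c)) + (1 - cos (vangle a b))))
           \<le> \<bar>psym \<sigma> a - psym \<sigma> b - psym \<sigma> c\<bar>"
proof -
  define k A where "k = 1 - 2 powr (-\<sigma>)"
    and "A = norm c * ((1 - cos (vangle a c)) + (1 - cos (vangle a b)))"
  have "0 \<le> k" "k \<le> 1" using assms(1) powr_mono[of "-\<sigma>" 0 2] by (simp_all add: k_def)
  moreover have "0 \<le> A" unfolding A_def by (rule norm_mult_vangle_defects_nonneg)
  ultimately have "k * A \<le> A" "0 \<le> k * T"
    using \<open>0 \<le> T\<close> mult_right_mono[of k 1 A] by simp_all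
  hence weights: "k / 8 * (T + A) \<le> k * T / 4 + A / 8" by (simp add: algebra_simps)
  have "a \<noteq> 0" using assms by auto
  have "norm a \<le> norm b + norm c" using norm_triangle_ineq[of b c] assms(3) by simp
  hence "k * T / 4 + (norm b + norm c - norm a) / 4
           \<le> radial \<sigma> (norm b) + radial \<sigma> (norm c) - radial \<sigma> (norm a)"
    using assms unfolding k_def by (intro radial_defect_ge) auto
  moreover have "A \<le> 2 * (norm b + norm c - norm a)"
    unfolding A_def distrib_left mult_2
    by (intro add_mono summand_vangle_defect_le_triangle_defect
        small_summand_vangle_defect_le_triangle_defect \<open>a \<noteq> 0\<close> assms(3-6))
  ultimately show ?thesis
    unfolding psym_eq_radial k_def[symmetric] A_def[symmetric]
    using weights abs_ge_minus_self[of "radial \<sigma> (norm a) - radial \<sigma> (norm b) - radial \<sigma> (norm c)"]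
    by linarith
qed

theorem lemma4p1:
  fixes \<sigma> :: real
  assumes "0 < \<sigma>" and "\<sigma> < 2"
  shows "\<exists>C>0. \<forall>a b c :: real^3.
           a = b + c \<and> norm c \<le> min (norm a) (norm b) \<and> norm b \<ge> 1 \<longrightarrow>
             (\<bar>psym \<sigma> a - psym \<sigma> b - psym \<sigma> c\<bar> \<ge>
                C * (norm c / (1 + (norm a * norm c) powr \<sigma>)
                     + norm c * ((1 - cos (vangle a c)) + (1 - cos (vangle a b)))))
             \<and> (norm c < 1 \<longrightarrow>
                \<bar>psym \<sigma> a - psym \<sigma> b - psym \<sigma> c\<bar> \<ge>
                  C * (norm c powr ((2 - \<sigma>) / 2) / sqrt (1 + norm b powr \<sigma>)))"
proof -
  define C where "C = (1 - 2 powr (-\<sigma>)) / 8"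
  have "0 < C" using powr_less_one[of 2 "-\<sigma>"] assms(1) by (simp add: C_def)
  moreover have "C * (norm c / (1 + (norm a * norm c) powr \<sigma>)
                   + norm c * ((1 - cos (vangle a c)) + (1 - cos (vangle a b))))
                 \<le> \<bar>psym \<sigma> a - psym \<sigma> b - psym \<sigma> c\<bar>"
    if "a = b + c" "norm c \<le> min (norm a) (norm b)" "1 \<le> norm b" for a b c :: "real^3"
  proof (cases "c = 0")
    case False
    with that assms show ?thesis
      unfolding C_def by (intro psym_defect_ge interaction_weight_le) (auto simp: add_pos_nonneg)
  qed simp
  moreover have "C * (norm c powr ((2 - \<sigma>) / 2) / sqrt (1 + norm b powr \<sigma>))
                 \<le> \<bar>psym \<sigma> a - psym \<sigma> b - psym \<sigma> c\<bar>"
    if "a = b + c" "norm c \<le> min (norm a) (norm b)" "1 \<le> norm b" "norm c < 1" for a b c :: "real^3"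
  proof (cases "c = 0")
    case False
    have "norm c powr ((2 - \<sigma>) / 2) / sqrt (1 + norm b powr \<sigma>) \<le> norm c powr ((2 - \<sigma>) / 2) / 1"
      by (intro divide_left_mono) (auto simp: add_pos_nonneg)
    also have "\<dots> \<le> norm c powr ((2 - \<sigma>) / 2) + norm c * ((1 - cos (vangle a c)) + (1 - cos (vangle a b)))"
      using norm_mult_vangle_defects_nonneg[of c a b] by simp
    finally have "C * (norm c powr ((2 - \<sigma>) / 2) / sqrt (1 + norm b powr \<sigma>))
        \<le> C * (norm c powr ((2 - \<sigma>) / 2) + norm c * ((1 - cos (vangle a c)) + (1 - cos (vangle a b))))"
      using \<open>0 < C\<close> by (intro mult_left_mono) auto
    also have "\<dots> \<le> \<bar>psym \<sigma> a - psym \<sigma> b - psym \<sigma> c\<bar>"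
      using that False assms unfolding C_def by (intro psym_defect_ge small_scale_weight_le) auto
    finally show ?thesis .
  qed simp
  ultimately show ?thesis by blast
qed

end
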